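(* Let $\mathcal F$ be a foam and $e$ a cyclic edge of $\mathcal F$ with both endpoints at the vertex $v$. Let $\mathcal N$ be a small regular neighbourhood of $v$ and let $\delta_+$ be an edge of the graph $\partial(\mathcal F\cap\mathcal N)$ such that exactly one endpoint of $\delta_+$ lies on $e$. Then the V-move at $v$ given by the 0-2 move along $\delta_+$ yields a foam $\mathcal F'$ with fewer cyclic edges than $\mathcal F$.
   Context: A foam in a compact connected three-manifold with boundary $M$ is the two-complex dual to an ideal triangulation of $M$. An edge loop is an edge with both ends at one vertex; a cyclic edge is an edge loop or a lift of one to a cover (here, in $\mathcal F$ itself, an edge loop). For a vertex $v$ with small regular neighbourhood $\mathcal N$, $\partial(\mathcal F\cap\mathcal N)$ is a complete graph on four vertices in the sphere $\partial\mathcal N$ whose edges are arcs in faces of $\mathcal F$. A 0-2 move along an arc $\delta$ properly embedded in a face and avoiding vertices pushes a thin neighbourhood of $\delta$ across the edges at its endpoints, creating two new vertices and a bigon face; the V-move at $v$ is the 0-2 move along one of these boundary arcs. *)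

theory Defs
  imports Main
begin

(* Combinatorial model of an ideal triangulation (and hence of its dual foam).
   Tetrahedra are numbered 0..<ntet T, each with vertices 0..3; face i of a
   tetrahedron is the face opposite vertex i.  A "face slot" (t,i) is a face of a
   tetrahedron; in the dual foam it is an END of a foam edge at the foam vertex t.
   nbr T (t,i) is the face slot glued to (t,i); gmap T (t,i) is the vertex map of
   the gluing (a permutation of 0..3 sending i to the index of the partner face). *)

datatype tri = Tri (ntet: nat) (nbr: "nat \<times> nat \<Rightarrow> nat \<times> nat")
                   (gmap: "nat \<times> nat \<Rightarrow> nat \<Rightarrow> nat")

definition Faces :: "tri \<Rightarrow> (nat \<times> nat) set" where
  "Faces T = {0..<ntet T} \<times> {0..<4}"

definition valid_gluing :: "tri \<Rightarrow> bool" where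
  "valid_gluing T \<longleftrightarrow> 0 < ntet T \<and>
     (\<forall>f\<in>Faces T. nbr T f \<in> Faces T \<and> nbr T f \<noteq> f \<and> nbr T (nbr T f) = f
        \<and> bij_betw (gmap T f) {0..<4} {0..<4}
        \<and> gmap T f (snd f) = snd (nbr T f)
        \<and> (\<forall>k<4. gmap T (nbr T f) (gmap T f k) = k))"

(* dual graph adjacency between tetrahedra (= foam vertices) *)
definition adj :: "tri \<Rightarrow> (nat \<times> nat) set" where
  "adj T = {(t, fst (nbr T (t,i))) | t i. (t,i) \<in> Faces T}"

(* identification of oriented edges (t,j,k) of tetrahedra induced by face gluings *)
definition edge_step :: "tri \<Rightarrow> ((nat \<times> nat \<times> nat) \<times> (nat \<times> nat \<times> nat)) set" where
  "edge_step T = {((t,j,k), (fst (nbr T (t,i)), gmap T (t,i) j, gmap T (t,i) k)) | t i j k.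
      (t,i) \<in> Faces T \<and> j < 4 \<and> k < 4 \<and> j \<noteq> k \<and> j \<noteq> i \<and> k \<noteq> i}"

(* A foam: the dual of an ideal triangulation of a compact connected 3-manifold
   (with boundary): finitely many tetrahedra, all faces glued in pairs,
   connected, and no edge identified with itself in reverse (this is exactly
   the condition for the truncated complex to be a 3-manifold with boundary). *)
definition is_foam :: "tri \<Rightarrow> bool" where
  "is_foam T \<longleftrightarrow> valid_gluing T \<and>
     (\<forall>t<ntet T. \<forall>t'<ntet T. (t,t') \<in> (adj T)\<^sup>*) \<and>
     (\<forall>t<ntet T. \<forall>j<4. \<forall>k<4. j \<noteq> k \<longrightarrow> ((t,j,k),(t,k,j)) \<notin> (edge_step T)\<^sup>*)"

(* foam edges are the unordered pairs of glued face slots; an edge loop (cyclic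
   edge) has both its ends at the same foam vertex *)
definition cyclic_edges :: "tri \<Rightarrow> (nat \<times> nat) set set" where
  "cyclic_edges T = {{f, nbr T f} | f. f \<in> Faces T \<and> fst (nbr T f) = fst f}"

(* V-move at foam vertex v along the arc delta of the boundary graph K4 joining the
   edge-ends a and b of v (a \<noteq> b): the 0-2 move on the faces a and b of tetrahedron
   v, which share the edge {c,d} = {0..3} - {a,b}.  Two new tetrahedra X = n, Y = n+1
   (a pillow) are inserted, with vertex labels x=0,y=1,z=2,w=3 corresponding to
   the vertices c,d,b,a of v. *)
definition vm_c :: "nat \<Rightarrow> nat \<Rightarrow> nat" where
  "vm_c a b = Min ({0..<4} - {a,b})"
definition vm_d :: "nat \<Rightarrow> nat \<Rightarrow> nat" where
  "vm_d a b = Max ({0..<4} - {a,b})"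
definition vm_tau :: "nat \<Rightarrow> nat \<Rightarrow> nat \<Rightarrow> nat" where
  "vm_tau a b k = (if k = 0 then vm_c a b else if k = 1 then vm_d a b
                   else if k = 2 then b else a)"
definition vm_tauinv :: "nat \<Rightarrow> nat \<Rightarrow> nat \<Rightarrow> nat" where
  "vm_tauinv a b k = (if k = a then 3 else if k = b then 2
                      else if k = vm_c a b then 0 else 1)"

definition vmove :: "tri \<Rightarrow> nat \<Rightarrow> nat \<Rightarrow> nat \<Rightarrow> tri" where
  "vmove T v a b =
    (let n = ntet T; X = n; Y = Suc n;
         pa = nbr T (v,a); pb = nbr T (v,b);
         nb = (\<lambda>f. if f = (v,a) then (X,3)
                  else if f = (v,b) then (X,2)
                  else if f = (X,3) then (v,a)
                  else if f = (X,2) then (v,b)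
                  else if f = (Y,3) then pa
                  else if f = (Y,2) then pb
                  else if f = pa then (Y,3)
                  else if f = pb then (Y,2)
                  else if f = (X,0) then (Y,0)
                  else if f = (Y,0) then (X,0)
                  else if f = (X,1) then (Y,1)
                  else if f = (Y,1) then (X,1)
                  else nbr T f);
         gm = (\<lambda>f. if f = (v,a) \<or> f = (v,b) then vm_tauinv a b
                  else if f = (X,3) \<or> f = (X,2) then vm_tau a b
                  else if f = (Y,3) then gmap T (v,a) \<circ> vm_tau a b
                  else if f = (Y,2) then gmap T (v,b) \<circ> vm_tau a b
                  else if f = pa then vm_tauinv a b \<circ> gmap T pa
                  else if f = pb then vm_tauinv a b \<circ> gmap T pb
                  else if f \<in> {(X,0),(Y,0),(X,1),(Y,1)} then id
                  else gmap T f)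
     in Tri (n + 2) nb gm)"

end

theory Submission
  imports Defs
begin

(* The V-move inserts a pillow of two tetrahedra X = n and Y = n + 1 between the
   faces a, b of v and their former partners. Old adjacencies survive as paths through the
   pillow, so the dual graph stays connected. Folding the pillow back onto v, with its vertex
   labels translated through tau, sends each edge-identification step of the new triangulation
   to at most one step of the old one, so no edge becomes identified with its reverse and the
   result is again a foam. Every gluing created by the move joins two distinct tetrahedra and
   the old gluings of the faces a, b of v are destroyed; hence the cyclic edges after the move
   are old cyclic edges avoiding (v, a) and (v, b), and the cyclic edge at v, one of whose ends
   is a or b, disappears. *)

lemma rtrancl_map:
  assumes "(x, y) \<in> R\<^sup>*" and "\<And>u w. (u, w) \<in> R \<Longrightarrow> (g u, g w) \<in> S\<^sup>*"
  shows "(g x, g y) \<in> S\<^sup>*"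
  using assms(1)
proof (induction rule: rtrancl_induct)
  case base
  then show ?case by simp
next
  case (step y z)
  then show ?case using assms(2) rtrancl_trans by metis
qed

lemma mem_Faces_iff: "(t, i) \<in> Faces T \<longleftrightarrow> t < ntet T \<and> i < 4"
  by (simp add: Faces_def)

lemma finite_cyclic_edges: "finite (cyclic_edges T)"
proof (rule finite_subset)
  show "cyclic_edges T \<subseteq> (\<lambda>f. {f, nbr T f}) ` Faces T"
    unfolding cyclic_edges_def by blast
  show "finite ((\<lambda>f. {f, nbr T f}) ` Faces T)"
    by (simp add: Faces_def)
qed

definition face_paired :: "tri \<Rightarrow> nat \<times> nat \<Rightarrow> bool" where
  "face_paired T f \<longleftrightarrow> nbr T f \<in> Faces T \<and> nbr T f \<noteq> f \<and> nbr T (nbr T f) = f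
     \<and> gmap T f (snd f) = snd (nbr T f) \<and> (\<forall>k<4. gmap T f k < 4)
     \<and> (\<forall>k<4. gmap T (nbr T f) (gmap T f k) = k)"

lemma valid_gluing_face_paired:
  assumes "valid_gluing T" and "f \<in> Faces T"
  shows "face_paired T f"
proof -
  have "bij_betw (gmap T f) {0..<4} {0..<4}"
    using assms unfolding valid_gluing_def by blast
  then have "\<forall>k<4. gmap T f k < 4"
    using bij_betwE by fastforce
  then show ?thesis
    using assms unfolding valid_gluing_def face_paired_def by blast
qed

lemma valid_gluingI:
  assumes "0 < ntet T" and "\<And>f. f \<in> Faces T \<Longrightarrow> face_paired T f"
  shows "valid_gluing T"
  unfolding valid_gluing_def
proof (intro conjI ballI assms(1))
  fix f assume f: "f \<in> Faces T"
  have f_paired: "face_paired T f" using assms(2) f .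
  then have "face_paired T (nbr T f)"
    using assms(2) unfolding face_paired_def by blast
  with f_paired show "bij_betw (gmap T f) {0..<4} {0..<4}"
    unfolding face_paired_def by (intro bij_betw_byWitness[where f' = "gmap T (nbr T f)"]) auto
  show "nbr T f \<in> Faces T" "nbr T f \<noteq> f" "nbr T (nbr T f) = f"
    "gmap T f (snd f) = snd (nbr T f)" "\<forall>k<4. gmap T (nbr T f) (gmap T f k) = k"
    using f_paired unfolding face_paired_def by auto
qed

lemma adjI: "(t, i) \<in> Faces T \<Longrightarrow> (t, fst (nbr T (t, i))) \<in> adj T"
  by (auto simp: adj_def)

lemma edge_stepI:
  assumes "f \<in> Faces T" "j < 4" "k < 4" "j \<noteq> k" "j \<noteq> snd f" "k \<noteq> snd f"
  shows "((fst f, j, k), (fst (nbr T f), gmap T f j, gmap T f k)) \<in> edge_step T"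
  using assms unfolding edge_step_def by (cases f) auto

lemma card_Int_doubleton_eq_1:
  assumes "card ({a, b} \<inter> B) = 1" and "a \<noteq> b"
  shows "a \<in> B \<longleftrightarrow> b \<notin> B"
  using assms by (cases "a \<in> B"; cases "b \<in> B") auto

lemma nbr_nbr_eq:
  assumes "valid_gluing T" and "f \<in> Faces T" and "nbr T f = g"
  shows "nbr T g = f"
  using valid_gluing_face_paired[OF assms(1,2)] assms(3) by (simp add: face_paired_def)

lemma vm_c_vm_d:
  assumes "a < 4" "b < 4" "a \<noteq> b"
  shows "vm_c a b < 4" "vm_d a b < 4" "vm_c a b \<noteq> vm_d a b"
    "vm_c a b \<noteq> a" "vm_c a b \<noteq> b" "vm_d a b \<noteq> a" "vm_d a b \<noteq> b"
proof -
  define S where "S = {0..<4::nat} - {a, b}"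
  have "finite S" by (simp add: S_def)
  have "card S = card {0..<4::nat} - card {a, b}"
    unfolding S_def by (rule card_Diff_subset) (use assms in auto)
  then have "card S = 2" using assms by simp
  then have "S \<noteq> {}" by auto
  have "Min S \<in> S" "Max S \<in> S" using \<open>finite S\<close> \<open>S \<noteq> {}\<close> by auto
  moreover have "Min S \<noteq> Max S"
  proof
    assume "Min S = Max S"
    have "S \<subseteq> {Min S}"
    proof
      fix x assume "x \<in> S"
      then have "Min S \<le> x" "x \<le> Max S" using \<open>finite S\<close> by auto
      then show "x \<in> {Min S}" using \<open>Min S = Max S\<close> by auto
    qed
    then have "card S \<le> 1" using card_mono[of "{Min S}" S] by simp
    with \<open>card S = 2\<close> show False by simp
  qed
  ultimately show "vm_c a b < 4" "vm_d a b < 4" "vm_c a b \<noteq> vm_d a b"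
    "vm_c a b \<noteq> a" "vm_c a b \<noteq> b" "vm_d a b \<noteq> a" "vm_d a b \<noteq> b"
    unfolding vm_c_def vm_d_def S_def[symmetric] by (auto simp: S_def)
qed

context
  fixes a b :: nat
  assumes a_less: "a < 4" and b_less: "b < 4" and a_neq_b: "a \<noteq> b"
begin

lemma vm_tau_less: "k < 4 \<Longrightarrow> vm_tau a b k < 4"
  and vm_tauinv_less: "vm_tauinv a b k < 4"
  using vm_c_vm_d[OF a_less b_less a_neq_b] a_less b_less
  by (auto simp: vm_tau_def vm_tauinv_def)

lemma vm_tauinv_tau: "k < 4 \<Longrightarrow> vm_tauinv a b (vm_tau a b k) = k"
  using vm_c_vm_d[OF a_less b_less a_neq_b] a_neq_b by (auto simp: vm_tau_def vm_tauinv_def)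

lemma vm_tau_tauinv:
  assumes "k < 4"
  shows "vm_tau a b (vm_tauinv a b k) = k"
proof -
  note cd = vm_c_vm_d[OF a_less b_less a_neq_b]
  have "{a, b, vm_c a b, vm_d a b} \<subseteq> {0..<4::nat}" using cd a_less b_less by auto
  moreover have "card {a, b, vm_c a b, vm_d a b} = 4" using cd a_neq_b by auto
  ultimately have "{0..<4::nat} = {a, b, vm_c a b, vm_d a b}"
    by (metis card_atLeastLessThan card_subset_eq diff_zero finite_atLeastLessThan)
  moreover have "k \<in> {0..<4}" using assms by simp
  ultimately show ?thesis using cd a_neq_b by (auto simp: vm_tau_def vm_tauinv_def)
qed

lemma vm_tau_inj: "j < 4 \<Longrightarrow> k < 4 \<Longrightarrow> vm_tau a b j = vm_tau a b k \<Longrightarrow> j = k"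
  using vm_tauinv_tau by metis

lemma vm_tau_3: "vm_tau a b 3 = a" and vm_tau_2: "vm_tau a b 2 = b"
  and vm_tauinv_a: "vm_tauinv a b a = 3" and vm_tauinv_b: "vm_tauinv a b b = 2"
  using a_neq_b by (auto simp: vm_tau_def vm_tauinv_def)

end

locale vmove_site =
  fixes T :: tri and v a b :: nat
  assumes foam: "is_foam T" and v_less: "v < ntet T"
    and a_less: "a < 4" and b_less: "b < 4" and a_neq_b: "a \<noteq> b"
    and not_glued: "nbr T (v, a) \<noteq> (v, b)"
    \<comment> \<open>otherwise pa = (v, b), and vmove would have to glue this face to both X and Y\<close>
begin

abbreviation "n \<equiv> ntet T"
abbreviation "pa \<equiv> nbr T (v, a)"
abbreviation "pb \<equiv> nbr T (v, b)"
abbreviation "T' \<equiv> vmove T v a b"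
abbreviation "tau \<equiv> vm_tau a b"
abbreviation "tauinv \<equiv> vm_tauinv a b"

lemmas tau_facts = vm_tau_less[OF a_less b_less a_neq_b] vm_tauinv_less[OF a_less b_less a_neq_b]
  vm_tauinv_tau[OF a_less b_less a_neq_b] vm_tau_tauinv[OF a_less b_less a_neq_b]
  vm_tau_3[OF a_less b_less a_neq_b] vm_tau_2[OF a_less b_less a_neq_b]
  vm_tauinv_a[OF a_less b_less a_neq_b] vm_tauinv_b[OF a_less b_less a_neq_b]

lemmas tau_inj = vm_tau_inj[OF a_less b_less a_neq_b]

lemma valid_T: "valid_gluing T"
  using foam by (simp add: is_foam_def)

lemma face_paired_T: "f \<in> Faces T \<Longrightarrow> face_paired T f"
  using valid_gluing_face_paired[OF valid_T] .

lemma va_Faces: "(v, a) \<in> Faces T" and vb_Faces: "(v, b) \<in> Faces T"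
  using v_less a_less b_less by (auto simp: mem_Faces_iff)

lemma pa_Faces: "pa \<in> Faces T" and pb_Faces: "pb \<in> Faces T"
  using face_paired_T[OF va_Faces] face_paired_T[OF vb_Faces] by (auto simp: face_paired_def)

lemma pa_less: "fst pa < n" "snd pa < 4" and pb_less: "fst pb < n" "snd pb < 4"
  using pa_Faces pb_Faces by (auto simp: Faces_def)

lemma pa_pb_distinct: "pa \<noteq> pb" "pa \<noteq> (v, a)" "pa \<noteq> (v, b)" "pb \<noteq> (v, a)" "pb \<noteq> (v, b)"
  using face_paired_T[OF va_Faces] face_paired_T[OF vb_Faces] a_neq_b not_glued
  unfolding face_paired_def by (metis prod.inject)+

lemma pa_pb_not_new: "pa \<noteq> (n, i)" "pa \<noteq> (Suc n, i)" "pb \<noteq> (n, i)" "pb \<noteq> (Suc n, i)"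
  "(n, i) \<noteq> pa" "(Suc n, i) \<noteq> pa" "(n, i) \<noteq> pb" "(Suc n, i) \<noteq> pb"
  using pa_less pb_less by (auto dest: arg_cong[where f = fst])

lemma pa_gluing: "nbr T pa = (v, a)" "gmap T (v, a) a = snd pa" "gmap T pa (snd pa) = a"
    "\<forall>k<4. gmap T pa (gmap T (v, a) k) = k" "\<forall>k<4. gmap T (v, a) (gmap T pa k) = k"
    "\<forall>k<4. gmap T (v, a) k < 4" "\<forall>k<4. gmap T pa k < 4"
  and pb_gluing: "nbr T pb = (v, b)" "gmap T (v, b) b = snd pb" "gmap T pb (snd pb) = b"
    "\<forall>k<4. gmap T pb (gmap T (v, b) k) = k" "\<forall>k<4. gmap T (v, b) (gmap T pb k) = k"
    "\<forall>k<4. gmap T (v, b) k < 4" "\<forall>k<4. gmap T pb k < 4"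
  using face_paired_T[OF va_Faces] face_paired_T[OF pa_Faces]
    face_paired_T[OF vb_Faces] face_paired_T[OF pb_Faces]
  unfolding face_paired_def by auto

lemma ntet_vmove: "ntet T' = n + 2"
  by (simp add: vmove_def Let_def)

lemma Faces_vmove_iff: "(t, i) \<in> Faces T' \<longleftrightarrow> t < n + 2 \<and> i < 4"
  by (simp add: mem_Faces_iff ntet_vmove)

lemma nbr_vmove:
  "nbr T' (v, a) = (n, 3)" "nbr T' (v, b) = (n, 2)"
  "nbr T' (n, 3) = (v, a)" "nbr T' (n, 2) = (v, b)"
  "nbr T' (Suc n, 3) = pa" "nbr T' (Suc n, 2) = pb"
  "nbr T' pa = (Suc n, 3)" "nbr T' pb = (Suc n, 2)"
  "nbr T' (n, 0) = (Suc n, 0)" "nbr T' (Suc n, 0) = (n, 0)"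
  "nbr T' (n, Suc 0) = (Suc n, Suc 0)" "nbr T' (Suc n, Suc 0) = (n, Suc 0)"
  using v_less a_neq_b pa_pb_distinct pa_pb_not_new pa_less pb_less by (auto simp: vmove_def Let_def)

lemma gmap_vmove:
  "gmap T' (v, a) = tauinv" "gmap T' (v, b) = tauinv"
  "gmap T' (n, 3) = tau" "gmap T' (n, 2) = tau"
  "gmap T' (Suc n, 3) = gmap T (v, a) \<circ> tau" "gmap T' (Suc n, 2) = gmap T (v, b) \<circ> tau"
  "gmap T' pa = tauinv \<circ> gmap T pa" "gmap T' pb = tauinv \<circ> gmap T pb"
  "gmap T' (n, 0) = id" "gmap T' (Suc n, 0) = id" "gmap T' (n, Suc 0) = id" "gmap T' (Suc n, Suc 0) = id"
  using v_less pa_pb_distinct pa_pb_not_new pa_less pb_less by (auto simp: vmove_def Let_def)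

definition untouched :: "nat \<times> nat \<Rightarrow> bool" where
  "untouched f \<longleftrightarrow> f \<in> Faces T \<and> f \<notin> {(v, a), (v, b), pa, pb}"

lemma untouched_less: "untouched f \<Longrightarrow> fst f < n"
  by (cases f) (auto simp: untouched_def mem_Faces_iff)

lemma untouched_nbr: "untouched f \<Longrightarrow> untouched (nbr T f)"
  using face_paired_T[of f] pa_gluing pb_gluing by (auto simp: untouched_def face_paired_def)

lemma vmove_untouched: "untouched f \<Longrightarrow> nbr T' f = nbr T f \<and> gmap T' f = gmap T f"
  using untouched_less[of f] by (cases f) (auto simp: untouched_def vmove_def Let_def)

lemma Faces_vmove_cases:
  assumes "f \<in> Faces T'"
  obtains "untouched f" | "f = (v, a)" | "f = (v, b)" | "f = pa" | "f = pb"
    | "f = (n, 3)" | "f = (n, 2)" | "f = (Suc n, 3)" | "f = (Suc n, 2)"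
    | i where "f = (n, i) \<or> f = (Suc n, i)" "i < 2"
proof -
  obtain t i where f: "f = (t, i)" "t < n + 2" "i < 4"
    using assms by (cases f) (auto simp: Faces_vmove_iff)
  consider "t < n" | "t = n" | "t = Suc n" using f by linarith
  then show ?thesis
    by cases (use f that in \<open>auto simp: untouched_def mem_Faces_iff less_Suc_eq numeral_eq_Suc\<close>)
qed

lemma Faces_subset_vmove: "Faces T \<subseteq> Faces T'"
  by (auto simp: Faces_def ntet_vmove)

lemma pa_Faces_vmove: "pa \<in> Faces T'" and pb_Faces_vmove: "pb \<in> Faces T'"
  using pa_Faces pb_Faces Faces_subset_vmove by blast+

lemma face_paired_vmove_v:
  "face_paired T' (v, a)" "face_paired T' (v, b)" "face_paired T' (n, 3)" "face_paired T' (n, 2)"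
  unfolding face_paired_def using v_less a_less b_less tau_facts
  by (auto simp: nbr_vmove gmap_vmove Faces_vmove_iff)

lemma face_paired_vmove_partners:
  "face_paired T' pa" "face_paired T' pb" "face_paired T' (Suc n, 3)" "face_paired T' (Suc n, 2)"
  unfolding face_paired_def
  using pa_Faces_vmove pb_Faces_vmove pa_pb_not_new pa_gluing pb_gluing tau_facts
  by (auto simp: nbr_vmove gmap_vmove Faces_vmove_iff)

lemma face_paired_vmove_pillow:
  "i < 2 \<Longrightarrow> face_paired T' (n, i)" "i < 2 \<Longrightarrow> face_paired T' (Suc n, i)"
  by (auto simp: less_2_cases_iff face_paired_def nbr_vmove gmap_vmove Faces_vmove_iff)

lemma face_paired_vmove_untouched:
  assumes "untouched f"
  shows "face_paired T' f"
proof -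
  have "untouched (nbr T f)" using untouched_nbr assms .
  then have "nbr T f \<in> Faces T'"
    using Faces_subset_vmove by (auto simp: untouched_def)
  moreover have "face_paired T f" using face_paired_T assms by (simp add: untouched_def)
  ultimately show ?thesis
    using vmove_untouched[OF assms] vmove_untouched[OF \<open>untouched (nbr T f)\<close>]
    by (simp add: face_paired_def)
qed

lemma valid_gluing_vmove: "valid_gluing T'"
proof (rule valid_gluingI)
  show "0 < ntet T'" by (simp add: ntet_vmove)
  show "face_paired T' f" if "f \<in> Faces T'" for f
    using that by (cases rule: Faces_vmove_cases) (auto intro: face_paired_vmove_v
      face_paired_vmove_partners face_paired_vmove_pillow face_paired_vmove_untouched)
qed

lemma adj_vmove_pillow:
  "(v, n) \<in> adj T'" "(n, v) \<in> adj T'" "(n, Suc n) \<in> adj T'" "(Suc n, n) \<in> adj T'"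
  "(Suc n, fst pa) \<in> adj T'" "(fst pa, Suc n) \<in> adj T'"
  "(Suc n, fst pb) \<in> adj T'" "(fst pb, Suc n) \<in> adj T'"
  using adjI[of v a T'] adjI[of n 3 T'] adjI[of n 0 T'] adjI[of "Suc n" 0 T']
    adjI[of "Suc n" 3 T'] adjI[of "fst pa" "snd pa" T'] adjI[of "Suc n" 2 T'] adjI[of "fst pb" "snd pb" T']
    v_less a_less pa_Faces_vmove pb_Faces_vmove
  by (simp_all add: nbr_vmove Faces_vmove_iff)

lemma adj_imp_rtrancl_adj_vmove:
  assumes "(x, y) \<in> adj T"
  shows "(x, y) \<in> (adj T')\<^sup>*"
proof -
  obtain i where xy: "(x, i) \<in> Faces T" "y = fst (nbr T (x, i))"
    using assms by (auto simp: adj_def)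
  note path = adj_vmove_pillow[THEN r_into_rtrancl]
  consider "untouched (x, i)" | "(x, i) = (v, a)" | "(x, i) = (v, b)" | "(x, i) = pa" | "(x, i) = pb"
    using xy(1) by (auto simp: untouched_def)
  then show ?thesis
  proof cases
    case 1
    then show ?thesis
      using adjI[of x i T'] vmove_untouched[OF 1] xy Faces_subset_vmove by auto
  next
    case 2
    then show ?thesis using xy path(1,3,5) by (metis fst_conv rtrancl_trans)
  next
    case 3
    then show ?thesis using xy path(1,3,7) by (metis fst_conv rtrancl_trans)
  next
    case 4
    then have "x = fst pa" "y = v" using xy pa_gluing(1) by (metis fst_conv)+
    then show ?thesis using path(2,4,6) by (metis rtrancl_trans)
  next
    case 5
    then have "x = fst pb" "y = v" using xy pb_gluing(1) by (metis fst_conv)+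
    then show ?thesis using path(2,4,8) by (metis rtrancl_trans)
  qed
qed

lemma connected_to_v_vmove:
  assumes "t < n + 2"
  shows "(t, v) \<in> (adj T')\<^sup>* \<and> (v, t) \<in> (adj T')\<^sup>*"
proof -
  note path = adj_vmove_pillow[THEN r_into_rtrancl]
  consider "t < n" | "t = n" | "t = Suc n" using assms by linarith
  then show ?thesis
  proof cases
    case 1
    then have "(t, v) \<in> (adj T)\<^sup>*" "(v, t) \<in> (adj T)\<^sup>*"
      using foam v_less unfolding is_foam_def by blast+
    then show ?thesis
      using rtrancl_map[where g = id and S = "adj T'"] adj_imp_rtrancl_adj_vmove by auto
  next
    case 2
    then show ?thesis using path(1,2) by simp
  next
    case 3
    then show ?thesis using path(1-4) by (metis rtrancl_trans)
  qed
qed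

lemma connected_vmove: "\<forall>t<ntet T'. \<forall>t'<ntet T'. (t, t') \<in> (adj T')\<^sup>*"
  using connected_to_v_vmove rtrancl_trans ntet_vmove by metis

definition fold_pillow :: "nat \<times> nat \<times> nat \<Rightarrow> nat \<times> nat \<times> nat" where
  "fold_pillow = (\<lambda>(t, j, k). if t < n then (t, j, k) else (v, tau j, tau k))"

lemma edge_step_at_v_relabelled:
  assumes "i < 4" "j < 4" "k < 4" "j \<noteq> k" "j \<noteq> i" "k \<noteq> i"
  shows "((v, tau j, tau k),
          (fst (nbr T (v, tau i)), gmap T (v, tau i) (tau j), gmap T (v, tau i) (tau k)))
         \<in> edge_step T"
proof -
  have "(v, tau i) \<in> Faces T"
    using assms v_less tau_facts by (simp add: mem_Faces_iff)
  moreover have "tau j \<noteq> tau k" "tau j \<noteq> tau i" "tau k \<noteq> tau i"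
    using assms tau_inj by metis+
  ultimately show ?thesis
    using edge_stepI[of "(v, tau i)" T "tau j" "tau k"] assms tau_facts by simp
qed

lemma fold_pillow_edge_step:
  assumes "(x, y) \<in> edge_step T'"
  shows "(fold_pillow x, fold_pillow y) \<in> (edge_step T)\<^sup>="
proof -
  obtain t i j k where xy: "x = (t, j, k)" "y = (fst (nbr T' (t, i)), gmap T' (t, i) j, gmap T' (t, i) k)"
    and ti: "(t, i) \<in> Faces T'" and jk: "j < 4" "k < 4" "j \<noteq> k" "j \<noteq> i" "k \<noteq> i"
    using assms unfolding edge_step_def by blast
  from ti show ?thesis
  proof (cases rule: Faces_vmove_cases)
    case 1
    have "fst (nbr T (t, i)) < n"
      using untouched_nbr[OF 1] untouched_less by blast
    then show ?thesis
      using 1 untouched_less[OF 1] vmove_untouched[OF 1] edge_stepI[of "(t, i)" T j k] jk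
      by (auto simp: xy fold_pillow_def untouched_def)
  next
    case 4
    then have "t = fst pa" "i = snd pa" by (metis fst_conv snd_conv)+
    then show ?thesis
      using jk pa_less pa_gluing tau_facts edge_stepI[OF pa_Faces, of j k]
      by (auto simp: xy fold_pillow_def nbr_vmove gmap_vmove)
  next
    case 5
    then have "t = fst pb" "i = snd pb" by (metis fst_conv snd_conv)+
    then show ?thesis
      using jk pb_less pb_gluing tau_facts edge_stepI[OF pb_Faces, of j k]
      by (auto simp: xy fold_pillow_def nbr_vmove gmap_vmove)
  next
    case 8
    then have "t = Suc n" "i = 3" by simp_all
    then show ?thesis
      using edge_step_at_v_relabelled[of 3 j k] jk pa_less tau_facts
      by (simp add: xy fold_pillow_def nbr_vmove gmap_vmove)
  next
    case 9
    then have "t = Suc n" "i = 2" by simp_all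
    then show ?thesis
      using edge_step_at_v_relabelled[of 2 j k] jk pb_less tau_facts
      by (simp add: xy fold_pillow_def nbr_vmove gmap_vmove)
  next
    case 10
    then show ?thesis
      by (auto simp: xy fold_pillow_def nbr_vmove gmap_vmove less_2_cases_iff)
  qed (use jk v_less tau_facts in \<open>simp_all add: xy fold_pillow_def nbr_vmove gmap_vmove\<close>)
qed

lemma no_edge_reversal_vmove:
  "\<forall>t<ntet T'. \<forall>j<4. \<forall>k<4. j \<noteq> k \<longrightarrow> ((t, j, k), (t, k, j)) \<notin> (edge_step T')\<^sup>*"
proof (intro allI impI notI)
  fix t j k
  assume "t < ntet T'" and jk: "j < 4" "k < 4" "j \<noteq> k"
    and reversal: "((t, j, k), (t, k, j)) \<in> (edge_step T')\<^sup>*"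
  have "(fold_pillow (t, j, k), fold_pillow (t, k, j)) \<in> (edge_step T)\<^sup>*"
    using reversal by (rule rtrancl_map) (force dest: fold_pillow_edge_step)
  moreover have "\<forall>t<n. \<forall>j<4. \<forall>k<4. j \<noteq> k \<longrightarrow> ((t, j, k), (t, k, j)) \<notin> (edge_step T)\<^sup>*"
    using foam by (simp add: is_foam_def)
  moreover have "tau j < 4" "tau k < 4" "tau j \<noteq> tau k"
    using jk tau_facts(1) tau_inj by blast+
  ultimately show False
    using jk v_less by (auto simp: fold_pillow_def split: if_splits)
qed

lemma is_foam_vmove: "is_foam T'"
  unfolding is_foam_def using valid_gluing_vmove connected_vmove no_edge_reversal_vmove by blast

lemma cyclic_edges_vmove:
  assumes "E \<in> cyclic_edges T'"
  shows "E \<in> cyclic_edges T \<and> (v, a) \<notin> E \<and> (v, b) \<notin> E"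
proof -
  obtain f where E: "E = {f, nbr T' f}" and f: "f \<in> Faces T'" and loop: "fst (nbr T' f) = fst f"
    using assms unfolding cyclic_edges_def by blast
  have "untouched f"
    using f
  proof (cases rule: Faces_vmove_cases)
    case 10
    then show ?thesis using loop by (auto simp: less_2_cases_iff nbr_vmove)
  qed (use loop v_less pa_less pb_less in \<open>simp_all add: nbr_vmove\<close>)
  then have "nbr T' f = nbr T f" and "untouched (nbr T f)"
    using vmove_untouched untouched_nbr by auto
  then have E_old: "E = {f, nbr T f}" and "fst (nbr T f) = fst f"
    using E loop by simp_all
  moreover have "f \<in> Faces T"
    using \<open>untouched f\<close> unfolding untouched_def by blast
  ultimately have "E \<in> cyclic_edges T"
    unfolding cyclic_edges_def by blast
  moreover have "(v, a) \<notin> E" "(v, b) \<notin> E"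
    using \<open>untouched f\<close> \<open>untouched (nbr T f)\<close> E_old by (auto simp only: untouched_def insert_iff)
  ultimately show ?thesis by blast
qed

lemma card_cyclic_edges_vmove_less:
  assumes "E \<in> cyclic_edges T" and "(v, a) \<in> E \<or> (v, b) \<in> E"
  shows "card (cyclic_edges T') < card (cyclic_edges T)"
proof -
  have "cyclic_edges T' \<subseteq> cyclic_edges T - {E}"
    using cyclic_edges_vmove assms(2) by blast
  then have "card (cyclic_edges T') \<le> card (cyclic_edges T - {E})"
    by (simp add: card_mono finite_cyclic_edges)
  also have "\<dots> < card (cyclic_edges T)"
    using card_Diff1_less[OF finite_cyclic_edges assms(1)] .
  finally show ?thesis .
qed

end

theorem mainTheorem6:
  fixes T :: tri and v p q a b :: nat
  assumes "is_foam T"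
    and "v < ntet T"
    and "p < 4" and "q < 4" and "p \<noteq> q" and "nbr T (v,p) = (v,q)"
    and "a < 4" and "b < 4" and "a \<noteq> b"
    and "card ({a,b} \<inter> {p,q}) = 1"
  shows "is_foam (vmove T v a b) \<and>
         card (cyclic_edges (vmove T v a b)) < card (cyclic_edges T)"
proof -
  have valid: "valid_gluing T" using assms(1) by (simp add: is_foam_def)
  have vp: "(v, p) \<in> Faces T" and va: "(v, a) \<in> Faces T"
    using assms by (simp_all add: mem_Faces_iff)
  have qp: "nbr T (v, q) = (v, p)" using nbr_nbr_eq[OF valid vp assms(6)] .
  have exactly_one: "a \<in> {p, q} \<longleftrightarrow> b \<notin> {p, q}"
    using card_Int_doubleton_eq_1[OF assms(10,9)] .
  have "nbr T (v, a) \<noteq> (v, b)"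
  proof
    assume ab: "nbr T (v, a) = (v, b)"
    then have "nbr T (v, b) = (v, a)" using nbr_nbr_eq[OF valid va] by blast
    with ab assms(6) qp have "a = p \<longleftrightarrow> b = q" "a = q \<longleftrightarrow> b = p" by auto
    with exactly_one show False by auto
  qed
  then interpret vmove_site T v a b
    using assms by unfold_locales
  have "{(v, p), (v, q)} \<in> cyclic_edges T"
    using vp assms(6) unfolding cyclic_edges_def by force
  moreover have "(v, a) \<in> {(v, p), (v, q)} \<or> (v, b) \<in> {(v, p), (v, q)}"
    using exactly_one by auto
  ultimately show ?thesis
    using is_foam_vmove card_cyclic_edges_vmove_less by blast
qed

end
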